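(* Let $A=(a_{ij})$ be an irreducible $d\times d$ matrix with entries in $\{0,1\}$, let $\rho$ be its Perron–Frobenius eigenvalue and $\mathbf v=(v_1,\dots,v_d)$ a positive probability vector with $A\mathbf v=\rho\mathbf v$. For $\mathbf z=(z_1,\dots,z_d)$ let $A(\mathbf z)$ be the matrix obtained from $A$ by replacing each entry $1$ in the $j$-th column by $z_j$. For $\mathbf q\in M_d^*=\{\mathbf q\in\mathbb R^d: q_i>0\ \forall i,\ \sum_i q_i=1\}$ define $\mathbf s(\mathbf q)=(s_1,\dots,s_d)$ by $s_j=\dfrac{q_j}{v_j\sum_{i=1}^d q_ia_{ij}/v_i}$. Then $$\det\big(I-A(\mathbf s(\mathbf q))\big)=0\quad\text{for all }\mathbf q\in M_d^*.$$
   Context: $I$ is the $d\times d$ identity matrix. *)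

theory Defs
  imports "HOL-Analysis.Analysis"
begin

fun mat_pow :: "('a::semiring_1)^'n^'n \<Rightarrow> nat \<Rightarrow> 'a^'n^'n" where
  "mat_pow A 0 = mat 1"
| "mat_pow A (Suc k) = A ** mat_pow A k"

definition irreducible_mat :: "real^'n^'n \<Rightarrow> bool" where
  "irreducible_mat A \<longleftrightarrow> (\<forall>i j. A $ i $ j \<ge> 0) \<and>
     (\<forall>i j. \<exists>k\<ge>1. mat_pow A k $ i $ j > 0)"

text \<open>Spectral radius (for an irreducible nonnegative matrix this is the
  Perron-Frobenius eigenvalue): max modulus of a complex eigenvalue.\<close>
definition perron_root :: "real^'n^'n \<Rightarrow> real" where
  "perron_root A = Max {cmod l | l. \<exists>x::complex^'n. x \<noteq> 0 \<and>
      (\<chi> i j. complex_of_real (A $ i $ j)) *v x = l *s x}"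

definition subst_mat :: "real^'n^'n \<Rightarrow> real^'n \<Rightarrow> real^'n^'n" where
  "subst_mat A z = (\<chi> i j. if A $ i $ j = 1 then z $ j else A $ i $ j)"

definition s_vec :: "real^'n^'n \<Rightarrow> real^'n \<Rightarrow> real^'n \<Rightarrow> real^'n" where
  "s_vec A v q = (\<chi> j. q $ j / (v $ j * (\<Sum>i\<in>UNIV. q $ i * A $ i $ j / v $ i)))"

end

theory Submission
  imports Defs
begin

text \<open>Put \<open>w\<^sub>i = q\<^sub>i / v\<^sub>i\<close>. Then \<open>s\<^sub>j = w\<^sub>j / (w A)\<^sub>j\<close>, and for a 0-1 matrix \<open>A(s)\<close> is \<open>A\<close>
  with column \<open>j\<close> scaled by \<open>s\<^sub>j\<close>, so \<open>(w A(s))\<^sub>j = s\<^sub>j (w A)\<^sub>j = w\<^sub>j\<close>: the positive vector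
  \<open>w\<close> is a left null vector of \<open>I - A(s)\<close>. Irreducibility is only needed to make every
  column of \<open>A\<close> nonzero, so that \<open>(w A)\<^sub>j > 0\<close>.\<close>

lemma mat_pow_Suc_right: "mat_pow A (Suc k) = mat_pow A k ** A"
proof (induction k)
  case 0
  then show ?case by (simp add: matrix_mul_lid matrix_mul_rid)
next
  case (Suc k)
  have "mat_pow A (Suc (Suc k)) = A ** (mat_pow A k ** A)"
    using Suc by simp
  also have "\<dots> = (A ** mat_pow A k) ** A"
    by (simp add: matrix_mul_assoc)
  finally show ?case by simp
qed

lemma irreducible_mat_column_nonzero:
  assumes "irreducible_mat A"
  shows "\<exists>i. A $ i $ j \<noteq> 0"
proof (rule ccontr)
  assume "\<not> (\<exists>i. A $ i $ j \<noteq> 0)"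
  then have zero_column: "A $ i $ j = 0" for i
    by auto
  obtain k where "k \<ge> 1" and pos: "mat_pow A k $ j $ j > 0"
    using assms unfolding irreducible_mat_def by blast
  then obtain m where "k = Suc m"
    by (cases k) auto
  then have "mat_pow A k $ j $ j = (mat_pow A m ** A) $ j $ j"
    by (simp only: mat_pow_Suc_right)
  also have "\<dots> = 0"
    using zero_column by (simp add: matrix_matrix_mult_def)
  finally show False
    using pos by simp
qed

lemma irreducible_mat_vector_matrix_mult_pos:
  assumes "irreducible_mat A" and "\<forall>i. w $ i > 0"
  shows "(w v* A) $ j > 0"
proof -
  have nonneg: "\<forall>i. A $ i $ j \<ge> 0"
    using assms(1) unfolding irreducible_mat_def by blast
  obtain i0 where "A $ i0 $ j \<noteq> 0"
    using irreducible_mat_column_nonzero[OF assms(1)] by blast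
  then have "A $ i0 $ j * w $ i0 > 0"
    using nonneg assms(2) by (simp add: order_less_le)
  moreover have "\<forall>i\<in>UNIV. A $ i $ j * w $ i \<ge> 0"
    using nonneg assms(2) by (simp add: less_imp_le)
  ultimately have "(\<Sum>i\<in>UNIV. A $ i $ j * w $ i) > 0"
    by (meson finite UNIV_I sum_pos2)
  then show ?thesis
    by (simp add: vector_matrix_mult_def mult.commute)
qed

lemma det_eq_0_if_left_null_vector:
  fixes M :: "'a::field^'n^'n"
  assumes "w \<noteq> 0" and "w v* M = 0"
  shows "det M = 0"
proof -
  have "transpose M *v w = 0"
    using assms(2) by simp
  then have "\<not> invertible (transpose M)"
    using assms(1) matrix_left_invertible_ker invertible_def by blast
  then show ?thesis
    by (simp add: invertible_det_nz det_transpose)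
qed

lemma left_null_vector_column_normalized:
  fixes A :: "'a::field^'n^'n"
  assumes "\<forall>j. (w v* A) $ j \<noteq> 0"
  shows "w v* (mat 1 - (\<chi> i j. A $ i $ j * (w $ j / (w v* A) $ j))) = 0"
proof -
  let ?B = "\<chi> i j. A $ i $ j * (w $ j / (w v* A) $ j)"
  have "(w v* ?B) $ j = w $ j" for j
  proof -
    have "(w v* ?B) $ j = w $ j / (w v* A) $ j * (w v* A) $ j"
      by (simp add: vector_matrix_mult_def sum_distrib_left sum_divide_distrib algebra_simps)
    also have "\<dots> = w $ j"
      using assms by simp
    finally show ?thesis .
  qed
  then have "w v* ?B = w"
    by (simp add: vec_eq_iff)
  then show ?thesis
    by (simp add: vector_matrix_mult_diff_rdistrib)
qed

lemma subst_mat_zero_one: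
  assumes "\<forall>i j. A $ i $ j \<in> {0, 1}"
  shows "subst_mat A z = (\<chi> i j. A $ i $ j * z $ j)"
  using assms unfolding subst_mat_def by (fastforce simp: vec_eq_iff)

lemma s_vec_eq_column_normalized:
  "s_vec A v q = (\<chi> j. w $ j / (w v* A) $ j)" if "w = (\<chi> i. q $ i / v $ i)"
  using that by (simp add: s_vec_def vector_matrix_mult_def mult.commute)

theorem corollary2:
  fixes A :: "real^'n^'n" and v q :: "real^'n" and \<rho> :: real
  assumes "\<forall>i j. A $ i $ j \<in> {0, 1}"
    and "irreducible_mat A"
    and "\<rho> = perron_root A"
    and "\<forall>i. v $ i > 0" and "(\<Sum>i\<in>UNIV. v $ i) = 1"
    and "A *v v = \<rho> *s v"
    and "\<forall>i. q $ i > 0" and "(\<Sum>i\<in>UNIV. q $ i) = 1"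
  shows "det (mat 1 - subst_mat A (s_vec A v q)) = 0"
proof -
  define w :: "real^'n" where "w = (\<chi> i. q $ i / v $ i)"
  have w_pos: "\<forall>i. w $ i > 0"
    using assms(4,7) by (simp add: w_def)
  then have "w \<noteq> 0"
    by (metis less_irrefl zero_index)
  have "\<forall>j. (w v* A) $ j \<noteq> 0"
    using irreducible_mat_vector_matrix_mult_pos[OF assms(2) w_pos] by (metis less_irrefl)
  then have "w v* (mat 1 - subst_mat A (s_vec A v q)) = 0"
    using left_null_vector_column_normalized
    by (simp add: subst_mat_zero_one[OF assms(1)] s_vec_eq_column_normalized[OF w_def])
  with \<open>w \<noteq> 0\<close> show ?thesis
    by (rule det_eq_0_if_left_null_vector)
qed

end
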